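(* Let $\vec u, \vec v, \vec w \in \mathbb{F}^3$ be unit vectors such that $\vec u$ and $\vec v$ are not parallel (i.e. not scalar multiples of each other). Then there exist finitely many linear isometric automorphisms $h_0, \dots, h_{k-1} : \mathbb{F}^3 \to \mathbb{F}^3$, each of which fixes either $\vec u$ or $\vec v$, such that $(h_0 \circ \dots \circ h_{k-1})(\vec u) = \vec w$.
   Context: $\mathbb{F}$ is either $\mathbb{R}$ or $\mathbb{C}$, and $\mathbb{F}^3$ carries its standard inner product. *)

theory Defs
  imports "HOL-Analysis.Analysis"
begin

definition lin_iso_aut :: "('a::real_normed_field ^ 3 \<Rightarrow> 'a ^ 3) \<Rightarrow> bool" where
  "lin_iso_aut h \<longleftrightarrow>
     (\<forall>x y. h (x + y) = h x + h y) \<and> (\<forall>c x. h (c *s x) = c *s h x) \<and>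
     bij h \<and> (\<forall>x. norm (h x) = norm x)"

definition parallel3 :: "'a::real_normed_field ^ 3 \<Rightarrow> 'a ^ 3 \<Rightarrow> bool" where
  "parallel3 u v \<longleftrightarrow> (\<exists>c. u = c *s v) \<or> (\<exists>c. v = c *s u)"

definition lemma3p5_prop :: "'a::real_normed_field itself \<Rightarrow> bool" where
  "lemma3p5_prop TYPE('a) \<longleftrightarrow>
    (\<forall>u v w :: 'a ^ 3. norm u = 1 \<longrightarrow> norm v = 1 \<longrightarrow> norm w = 1 \<longrightarrow> \<not> parallel3 u v \<longrightarrow>
      (\<exists>hs. (\<forall>h\<in>set hs. lin_iso_aut h \<and> (h u = u \<or> h v = v)) \<and> foldr (\<circ>) hs id u = w))"

end

theory Submission
  imports Defs
begin

text \<open>Let \<open>G\<close> be the set of products of isometries fixing \<open>u\<close> or \<open>v\<close>, and call \<open>x\<close> rigid if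
every isometry fixing \<open>x\<close> lies in \<open>G\<close>. The vectors \<open>u\<close>, \<open>v\<close> are rigid and \<open>G\<close> maps rigid vectors
to rigid vectors. For vectors \<open>a\<close>, \<open>b\<close> of equal norm with \<open>\<langle>c,a\<rangle> = \<langle>c,b\<rangle>\<close> a reflection in the
hyperplane orthogonal to \<open>a - b\<close> fixes \<open>c\<close> and maps \<open>a\<close> to \<open>b\<close>; so from rigid unit vectors
\<open>x\<close>, \<open>y\<close> with \<open>q = \<langle>y,x\<rangle>\<close> we get the rigid unit vector \<open>2 q y - x\<close>, whose product with \<open>x\<close> has
squared modulus \<open>(2|q|\<^sup>2 - 1)\<^sup>2\<close>. Starting from \<open>x = u\<close>, \<open>y = v\<close>, where \<open>|q| < 1\<close> as \<open>u\<close>, \<open>v\<close> are not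
parallel, this at least doubles \<open>1 - |q|\<^sup>2\<close> until \<open>|q|\<^sup>2 \<le> 1/2\<close>, and then a rigid unit vector
orthogonal to \<open>u\<close> can be written down explicitly; this uses that the dimension is 3. With such a vector \<open>x\<close>, every unit
vector \<open>w\<close> is reached from \<open>u\<close> by an isometry fixing \<open>x\<close> followed by one fixing \<open>u\<close>.\<close>

section \<open>Linear isometric automorphisms\<close>

lemma lin_iso_autI:
  fixes h :: "'a::real_normed_field^3 \<Rightarrow> 'a^3"
  assumes add: "\<And>x y. h (x + y) = h x + h y" and scale: "\<And>c x. h (c *s x) = c *s h x"
    and isom: "\<And>x. norm (h x) = norm x"
  shows "lin_iso_aut h"
proof -
  have lin: "Vector_Spaces.linear (*s) (*s) h"
    unfolding Vector_Spaces.linear_iff using add scale by (simp add: vec.vector_space_axioms)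
  have "inj h"
    unfolding vec.linear_inj_iff_eq_0[OF lin] using isom by (metis norm_eq_zero)
  moreover have "surj h" using vec.linear_injective_imp_surjective[OF lin \<open>inj h\<close>] by simp
  ultimately show ?thesis using add scale isom unfolding lin_iso_aut_def bij_def by simp
qed

lemma lin_iso_aut_id: "lin_iso_aut id"
  unfolding lin_iso_aut_def by simp

lemma lin_iso_aut_comp: "lin_iso_aut f \<Longrightarrow> lin_iso_aut g \<Longrightarrow> lin_iso_aut (f \<circ> g)"
  unfolding lin_iso_aut_def by (auto intro: bij_comp)

lemma lin_iso_aut_inv:
  assumes "lin_iso_aut f"
  shows "lin_iso_aut (inv f)"
proof -
  have b: "bij f" and add: "\<And>x y. f (x + y) = f x + f y" and scale: "\<And>c x. f (c *s x) = c *s f x"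
    and isom: "\<And>x. norm (f x) = norm x"
    using assms unfolding lin_iso_aut_def by auto
  have f_inv: "f (inv f y) = y" for y using b by (simp add: bij_is_surj surj_f_inv_f)
  have inv_f: "inv f (f x) = x" for x using b by (simp add: bij_is_inj)
  show ?thesis
    unfolding lin_iso_aut_def
  proof (intro conjI allI)
    show "inv f (x + y) = inv f x + inv f y" for x y by (metis add f_inv inv_f)
    show "inv f (c *s x) = c *s inv f x" for c x by (metis scale f_inv inv_f)
    show "bij (inv f)" using b by (rule bij_imp_bij_inv)
    show "norm (inv f x) = norm x" for x by (metis isom f_inv)
  qed
qed

section \<open>Products of isometries fixing \<open>u\<close> or \<open>v\<close>\<close>

definition iso_stabilizer :: "'a::real_normed_field^3 \<Rightarrow> ('a^3 \<Rightarrow> 'a^3) set" where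
  "iso_stabilizer x = {h. lin_iso_aut h \<and> h x = x}"

definition stab_group :: "'a::real_normed_field^3 \<Rightarrow> 'a^3 \<Rightarrow> ('a^3 \<Rightarrow> 'a^3) set" where
  "stab_group u v = {foldr (\<circ>) hs id | hs. set hs \<subseteq> iso_stabilizer u \<union> iso_stabilizer v}"

definition rigid :: "'a::real_normed_field^3 \<Rightarrow> 'a^3 \<Rightarrow> ('a^3) set" where
  "rigid u v = {x. iso_stabilizer x \<subseteq> stab_group u v}"

lemma iso_stabilizer_inv:
  assumes "h \<in> iso_stabilizer x"
  shows "inv h \<in> iso_stabilizer x"
proof -
  have "lin_iso_aut h" and "h x = x" using assms unfolding iso_stabilizer_def by auto
  moreover from this have "inv h x = x" unfolding lin_iso_aut_def by (blast intro: inv_f_eq bij_is_inj)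
  ultimately show ?thesis unfolding iso_stabilizer_def by (simp add: lin_iso_aut_inv)
qed

lemma stab_group_id: "id \<in> stab_group u v"
  unfolding stab_group_def by (intro CollectI exI[of _ "[]"]) simp

lemma stab_group_generator: "h \<in> iso_stabilizer u \<union> iso_stabilizer v \<Longrightarrow> h \<in> stab_group u v"
  unfolding stab_group_def by (intro CollectI exI[of _ "[h]"]) simp

lemma foldr_comp_id: "foldr (\<circ>) hs g = foldr (\<circ>) hs id \<circ> g"
  by (induction hs) (auto simp: comp_assoc)

lemma stab_group_comp:
  assumes "f \<in> stab_group u v" and "g \<in> stab_group u v"
  shows "f \<circ> g \<in> stab_group u v"
proof -
  obtain hs ks where "f = foldr (\<circ>) hs id" "g = foldr (\<circ>) ks id"
    and "set (hs @ ks) \<subseteq> iso_stabilizer u \<union> iso_stabilizer v"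
    using assms unfolding stab_group_def by auto
  moreover have "foldr (\<circ>) (hs @ ks) id = foldr (\<circ>) hs id \<circ> foldr (\<circ>) ks id"
    by (simp add: foldr_comp_id[of hs "foldr (\<circ>) ks id"])
  ultimately show ?thesis unfolding stab_group_def by (intro CollectI exI[of _ "hs @ ks"]) simp
qed

lemma stab_group_lin_iso_aut:
  assumes "g \<in> stab_group u v"
  shows "lin_iso_aut g"
proof -
  obtain hs where g: "g = foldr (\<circ>) hs id" and hs: "set hs \<subseteq> iso_stabilizer u \<union> iso_stabilizer v"
    using assms unfolding stab_group_def by blast
  from hs have "lin_iso_aut (foldr (\<circ>) hs id)"
    by (induction hs) (auto simp: lin_iso_aut_id iso_stabilizer_def intro: lin_iso_aut_comp)
  then show ?thesis unfolding g .
qed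

lemma stab_group_inv:
  assumes "g \<in> stab_group u v"
  shows "inv g \<in> stab_group u v"
proof -
  obtain hs where g: "g = foldr (\<circ>) hs id" and hs: "set hs \<subseteq> iso_stabilizer u \<union> iso_stabilizer v"
    using assms unfolding stab_group_def by blast
  from hs have "inv (foldr (\<circ>) hs id) \<in> stab_group u v"
  proof (induction hs)
    case Nil
    show ?case using stab_group_id[of u v] by (simp add: id_def)
  next
    case (Cons h hs)
    then have h: "h \<in> iso_stabilizer u \<union> iso_stabilizer v"
      and hs: "set hs \<subseteq> iso_stabilizer u \<union> iso_stabilizer v" by simp_all
    then have "foldr (\<circ>) hs id \<in> stab_group u v" unfolding stab_group_def by blast
    then have "lin_iso_aut (foldr (\<circ>) hs id)" by (rule stab_group_lin_iso_aut)
    moreover have "lin_iso_aut h" using h unfolding iso_stabilizer_def by blast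
    ultimately have "bij h" "bij (foldr (\<circ>) hs id)" unfolding lin_iso_aut_def by simp_all
    then have eq: "inv (foldr (\<circ>) (h # hs) id) = inv (foldr (\<circ>) hs id) \<circ> inv h"
      by (simp add: o_inv_distrib)
    have "inv h \<in> stab_group u v"
      using h iso_stabilizer_inv stab_group_generator by blast
    with Cons.IH[OF hs] have "inv (foldr (\<circ>) hs id) \<circ> inv h \<in> stab_group u v"
      by (rule stab_group_comp)
    then show ?case unfolding eq .
  qed
  then show ?thesis unfolding g .
qed

lemma rigid_left: "u \<in> rigid u v"
  unfolding rigid_def using stab_group_generator by blast

lemma rigid_right: "v \<in> rigid u v"
  unfolding rigid_def using stab_group_generator by blast

lemma rigid_image:
  assumes x: "x \<in> rigid u v" and g: "g \<in> stab_group u v"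
  shows "g x \<in> rigid u v"
  unfolding rigid_def
proof (intro CollectI subsetI)
  fix k assume k: "k \<in> iso_stabilizer (g x)"
  have g_iso: "lin_iso_aut g" using g by (rule stab_group_lin_iso_aut)
  then have bij: "bij g" unfolding lin_iso_aut_def by blast
  have "lin_iso_aut k" using k unfolding iso_stabilizer_def by blast
  then have "lin_iso_aut (inv g \<circ> k \<circ> g)"
    using g_iso by (intro lin_iso_aut_comp lin_iso_aut_inv)
  moreover have "(inv g \<circ> k \<circ> g) x = x"
    using k bij unfolding iso_stabilizer_def by (simp add: bij_is_inj)
  ultimately have "inv g \<circ> k \<circ> g \<in> stab_group u v"
    using x unfolding rigid_def iso_stabilizer_def by blast
  with g have "g \<circ> (inv g \<circ> k \<circ> g) \<in> stab_group u v" by (rule stab_group_comp)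
  then have "g \<circ> (inv g \<circ> k \<circ> g) \<circ> inv g \<in> stab_group u v"
    using stab_group_inv[OF g] by (rule stab_group_comp)
  moreover have "g \<circ> (inv g \<circ> k \<circ> g) \<circ> inv g = k"
    using bij by (simp add: fun_eq_iff bij_is_surj surj_f_inv_f)
  ultimately show "k \<in> stab_group u v" by simp
qed

lemma norm_vector_scale: "norm (c *s x) = norm c * norm (x :: 'a::real_normed_field^'n)"
  unfolding norm_vec_def by (simp add: norm_mult L2_set_right_distrib)

section \<open>Hermitian product\<close>

text \<open>\<open>cnj\<close> is the identity on \<open>\<real>\<close> and complex conjugation on \<open>\<complex>\<close> (see the interpretations at
the end); \<open>hinner\<close> is conjugate-linear in its first argument.\<close>

locale field_conjugation =
  fixes cnj :: "'a::real_normed_field \<Rightarrow> 'a"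
  assumes cnj_add: "cnj (a + b) = cnj a + cnj b"
    and cnj_mult: "cnj (a * b) = cnj a * cnj b"
    and cnj_cnj: "cnj (cnj a) = a"
    and cnj_of_real: "cnj (of_real r) = of_real r"
    and mult_cnj_self: "a * cnj a = of_real (norm a ^ 2)"
begin

lemmas cnj_simps [simp] = cnj_add cnj_mult cnj_cnj cnj_of_real

lemma cnj_0 [simp]: "cnj 0 = 0"
  using cnj_of_real[of 0] by simp

lemma cnj_1 [simp]: "cnj 1 = 1"
  using cnj_of_real[of 1] by simp

lemma cnj_numeral [simp]: "cnj (numeral n) = numeral n"
  using cnj_of_real[of "numeral n"] by simp

lemma cnj_minus [simp]: "cnj (- a) = - cnj a"
  using cnj_add[of a "- a"] by (simp add: eq_neg_iff_add_eq_0 add.commute)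

lemma cnj_diff [simp]: "cnj (a - b) = cnj a - cnj b"
  using cnj_add[of a "- b"] by simp

lemma cnj_eq_0_iff [simp]: "cnj a = 0 \<longleftrightarrow> a = 0"
  by (metis cnj_0 cnj_cnj)

lemma cnj_divide [simp]: "cnj (a / b) = cnj a / cnj b"
proof (cases "b = 0")
  case False
  have "cnj (a / b) * cnj b = cnj a" using cnj_mult[of "a / b" b] False by simp
  then show ?thesis using False by (simp add: eq_divide_eq)
qed simp

lemma cnj_sum: "cnj (sum f A) = (\<Sum>i\<in>A. cnj (f i))"
  by (induction A rule: infinite_finite_induct) auto

lemma cnj_mult_self: "cnj a * a = of_real (norm a ^ 2)"
  using mult_cnj_self by (simp add: mult.commute)

definition hinner :: "'a^3 \<Rightarrow> 'a^3 \<Rightarrow> 'a" where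
  "hinner x y = (\<Sum>i\<in>UNIV. cnj (x $ i) * y $ i)"

lemma hinner_add_right [simp]: "hinner x (y + z) = hinner x y + hinner x z"
  unfolding hinner_def by (simp add: distrib_left sum.distrib)

lemma hinner_add_left [simp]: "hinner (x + y) z = hinner x z + hinner y z"
  unfolding hinner_def by (simp add: distrib_right sum.distrib)

lemma hinner_diff_right [simp]: "hinner x (y - z) = hinner x y - hinner x z"
  unfolding hinner_def by (simp add: right_diff_distrib sum_subtractf)

lemma hinner_diff_left [simp]: "hinner (x - y) z = hinner x z - hinner y z"
  unfolding hinner_def by (simp add: left_diff_distrib sum_subtractf)

lemma hinner_scale_right [simp]: "hinner x (c *s y) = c * hinner x y"
  unfolding hinner_def by (simp add: sum_distrib_left algebra_simps)

lemma hinner_scale_left [simp]: "hinner (c *s x) y = cnj c * hinner x y"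
  unfolding hinner_def by (simp add: sum_distrib_left algebra_simps)

lemma hinner_zero_left [simp]: "hinner 0 y = 0"
  unfolding hinner_def by simp

lemma hinner_zero_right [simp]: "hinner x 0 = 0"
  unfolding hinner_def by simp

lemma cnj_hinner: "cnj (hinner x y) = hinner y x"
  unfolding hinner_def cnj_sum by (simp add: mult.commute)

lemma hinner_eq_0_commute: "hinner x y = 0 \<longleftrightarrow> hinner y x = 0"
  by (metis cnj_hinner cnj_eq_0_iff)

lemma hinner_self: "hinner x x = of_real (norm x ^ 2)"
proof -
  have "hinner x x = (\<Sum>i\<in>UNIV. of_real (norm (x $ i) ^ 2))"
    unfolding hinner_def by (simp del: of_real_power add: cnj_mult_self)
  also have "\<dots> = of_real (\<Sum>i\<in>UNIV. norm (x $ i) ^ 2)"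
    by simp
  also have "(\<Sum>i\<in>UNIV. norm (x $ i) ^ 2) = norm x ^ 2"
    unfolding norm_vec_def L2_set_def by (simp add: sum_nonneg)
  finally show ?thesis .
qed

lemma cnj_hinner_self [simp]: "cnj (hinner x x) = hinner x x"
  by (simp add: hinner_self del: of_real_power)

lemma hinner_self_eq_0_iff: "hinner x x = 0 \<longleftrightarrow> x = 0"
  by (simp add: hinner_self)

lemma norm_eq_iff_hinner_self: "norm x = norm y \<longleftrightarrow> hinner x x = hinner y y"
  unfolding hinner_self of_real_eq_iff by (simp add: power2_eq_iff_nonneg)

lemma norm_eq_1_iff_hinner_self: "norm x = 1 \<longleftrightarrow> hinner x x = 1"
proof -
  have "hinner x x = 1 \<longleftrightarrow> norm x ^ 2 = 1"
    unfolding hinner_self by (metis of_real_1 of_real_eq_iff)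
  then show ?thesis using power2_eq_1_iff[of "norm x"] norm_ge_zero[of x] by linarith
qed

lemma norm_diff_projection:
  assumes "norm a = 1"
  shows "norm (b - hinner a b *s a) ^ 2 = norm b ^ 2 - norm (hinner a b) ^ 2"
proof -
  define q where "q = hinner a b"
  have "hinner a a = 1" using assms norm_eq_1_iff_hinner_self by blast
  moreover have "hinner b a = cnj q" unfolding q_def by (simp add: cnj_hinner)
  ultimately have "hinner (b - q *s a) (b - q *s a) = hinner b b - cnj q * q"
    by (simp add: q_def[symmetric] algebra_simps)
  then have "of_real (norm (b - q *s a) ^ 2) = (of_real (norm b ^ 2 - norm q ^ 2) :: 'a)"
    by (simp add: hinner_self cnj_mult_self del: of_real_power)
  then show ?thesis unfolding q_def of_real_eq_iff .
qed

lemma unit_hinner_le_1: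
  assumes "norm a = 1" and "norm b = 1"
  shows "norm (hinner a b) ^ 2 \<le> 1"
  using norm_diff_projection[OF assms(1), of b] assms(2)
  by (metis diff_ge_0_iff_ge power_one zero_le_power2)

lemma unit_hinner_eq_1:
  assumes "norm a = 1" and "norm b = 1" and "norm (hinner a b) ^ 2 = 1"
  shows "b = hinner a b *s a"
  using norm_diff_projection[OF assms(1), of b] assms(2,3) by simp

text \<open>The cross product is conjugated so that it is orthogonal to both factors for \<open>hinner\<close>.\<close>

definition cross3 :: "'a^3 \<Rightarrow> 'a^3 \<Rightarrow> 'a^3" where
  "cross3 a b = vector [cnj (a$2 * b$3 - a$3 * b$2), cnj (a$3 * b$1 - a$1 * b$3),
    cnj (a$1 * b$2 - a$2 * b$1)]"

lemma hinner_3: "hinner x y = cnj (x$1) * y$1 + cnj (x$2) * y$2 + cnj (x$3) * y$3"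
  unfolding hinner_def by (simp add: sum_3)

lemma hinner_cross3_left: "hinner a (cross3 a b) = 0"
  unfolding hinner_3 cross3_def by (simp add: algebra_simps)

lemma hinner_cross3_right: "hinner b (cross3 a b) = 0"
  unfolding hinner_3 cross3_def by (simp add: algebra_simps)

lemma hinner_self_cross3:
  "hinner (cross3 a b) (cross3 a b) = hinner a a * hinner b b - hinner a b * hinner b a"
  unfolding hinner_3 cross3_def by (simp add: algebra_simps)

lemma exists_unit_orthogonal:
  assumes "hinner a b = 0" and "a \<noteq> 0" and "b \<noteq> 0"
  shows "\<exists>g. norm g = 1 \<and> hinner a g = 0 \<and> hinner b g = 0"
proof -
  define w where "w = cross3 a b"
  have "hinner w w = hinner a a * hinner b b"
    unfolding w_def hinner_self_cross3 using assms(1) by simp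
  also have "\<dots> \<noteq> 0" using assms(2,3) by (simp add: hinner_self_eq_0_iff)
  finally have "w \<noteq> 0" by auto
  define g where "g = of_real (1 / norm w) *s w"
  have "norm g = 1" unfolding g_def norm_vector_scale using \<open>w \<noteq> 0\<close> by (simp add: norm_divide)
  moreover have "hinner a g = 0" "hinner b g = 0"
    unfolding g_def w_def by (simp_all add: hinner_cross3_left hinner_cross3_right)
  ultimately show ?thesis by blast
qed

text \<open>With \<open>n = a - b\<close> and \<open>d = \<langle>n,a\<rangle>\<close>, the map \<open>x \<mapsto> x - (\<langle>n,x\<rangle>/d) n\<close> sends \<open>a\<close> to \<open>a - n = b\<close>, fixes
\<open>n\<^sup>\<bottom>\<close>, which contains \<open>c\<close>, and multiplies \<open>n\<close> by \<open>-cnj d / d\<close>; it is isometric because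
\<open>\<langle>n,n\<rangle> = d + cnj d\<close> when \<open>|a| = |b|\<close>.\<close>

lemma exists_iso_stabilizer_map:
  assumes "norm a = norm b" and "hinner c a = hinner c b"
  shows "\<exists>h\<in>iso_stabilizer c. h a = b"
proof (cases "a = b")
  case True
  then show ?thesis unfolding iso_stabilizer_def using lin_iso_aut_id by auto
next
  case False
  define n where "n = a - b"
  define d where "d = hinner n a"
  have "hinner b b = hinner a a" using assms(1) norm_eq_iff_hinner_self by metis
  then have nn: "hinner n n = d + cnj d"
    unfolding d_def n_def by (simp add: cnj_hinner)
  have "n \<noteq> 0" using False unfolding n_def by simp
  then have "d + cnj d \<noteq> 0" using nn hinner_self_eq_0_iff[of n] by metis
  then have d: "d \<noteq> 0" "cnj d \<noteq> 0" by auto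
  define h where "h x = x - (hinner n x / d) *s n" for x
  have "norm (h x) = norm x" for x
  proof -
    define p where "p = hinner n x"
    have xn: "hinner x n = cnj p" unfolding p_def by (simp add: cnj_hinner)
    have key: "p / d * cnj p + cnj p / cnj d * p = cnj p / cnj d * (p / d) * (d + cnj d)"
      using d by (simp add: field_simps)
    have "hinner (h x) (h x)
        = hinner x x - (p / d) * hinner x n - cnj (p / d) * p + cnj (p / d) * (p / d) * hinner n n"
      unfolding h_def p_def by (simp add: algebra_simps)
    also have "\<dots> = hinner x x"
      unfolding xn nn using key by (simp add: algebra_simps)
    finally show ?thesis using norm_eq_iff_hinner_self by simp
  qed
  then have "lin_iso_aut h"
    by (intro lin_iso_autI) (simp_all add: h_def vec_eq_iff algebra_simps add_divide_distrib)
  moreover have "hinner c n = 0" unfolding n_def using assms(2) by simp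
  then have "hinner n c = 0" by (simp add: hinner_eq_0_commute)
  then have "h c = c" unfolding h_def by simp
  moreover have "h a = b" unfolding h_def d_def[symmetric] using d n_def by simp
  ultimately show ?thesis unfolding iso_stabilizer_def by blast
qed

lemma rigid_move:
  assumes "c \<in> rigid u v" and "norm a = norm b" and "hinner c a = hinner c b"
  shows "\<exists>g\<in>stab_group u v. g a = b"
  using exists_iso_stabilizer_map[OF assms(2,3)] assms(1) unfolding rigid_def by blast

lemma rigid_move_rigid:
  assumes "c \<in> rigid u v" and "a \<in> rigid u v" and "norm a = norm b" and "hinner c a = hinner c b"
  shows "b \<in> rigid u v"
  using rigid_move[OF assms(1,3,4)] rigid_image[OF assms(2)] by blast

section \<open>A rigid vector orthogonal to \<open>u\<close>\<close>

lemma rigid_doubling: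
  assumes x: "x \<in> rigid u v" "norm x = 1" and y: "y \<in> rigid u v" "norm y = 1"
  shows "\<exists>z\<in>rigid u v. norm z = 1 \<and> norm (hinner z x) ^ 2 = (2 * norm (hinner y x) ^ 2 - 1) ^ 2"
proof -
  define q where "q = hinner y x"
  define z where "z = (2 * q) *s y - x"
  have xx: "hinner x x = 1" and yy: "hinner y y = 1"
    using x(2) y(2) norm_eq_1_iff_hinner_self by blast+
  have xy: "hinner x y = cnj q" unfolding q_def by (simp add: cnj_hinner)
  have yz: "hinner y z = hinner y x" unfolding z_def by (simp add: yy q_def[symmetric])
  have "hinner z z = 4 * (cnj q * q) - 2 * (cnj q * q) - 2 * (cnj q * q) + 1"
    unfolding z_def by (simp add: xx yy xy q_def[symmetric] algebra_simps)
  then have nz: "norm z = 1" using norm_eq_1_iff_hinner_self by simp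
  have "z \<in> rigid u v"
    by (rule rigid_move_rigid[OF y(1) x(1)]) (simp_all add: x(2) nz yz)
  moreover have "hinner z x = 2 * (cnj q * q) - 1"
    unfolding z_def by (simp add: xx q_def[symmetric] algebra_simps)
  then have "hinner z x = of_real (2 * norm q ^ 2 - 1)" by (simp add: cnj_mult_self)
  then have "norm (hinner z x) = \<bar>2 * norm q ^ 2 - 1\<bar>" by (simp only: norm_of_real)
  then have "norm (hinner z x) ^ 2 = (2 * norm q ^ 2 - 1) ^ 2" by simp
  ultimately show ?thesis using nz q_def by blast
qed

text \<open>With \<open>q = \<langle>y,x\<rangle>\<close>, \<open>m = |q|\<^sup>2\<close>, \<open>x = q y + e\<close> and \<open>g\<close> a unit vector orthogonal to \<open>y\<close> and \<open>e\<close>, the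
vector \<open>z = q y + t e + s g\<close> satisfies \<open>\<langle>y,z\<rangle> = \<langle>y,x\<rangle>\<close>, so it is rigid once it is a unit vector.
The choice \<open>t = -m/(1 - m)\<close> makes it orthogonal to \<open>x\<close>, and a real \<open>s\<close> making it a unit vector
exists exactly when \<open>t\<^sup>2 \<le> 1\<close>, i.e. \<open>m \<le> 1/2\<close>.\<close>

lemma rigid_orthogonal_if_small_hinner:
  assumes x: "x \<in> rigid u v" "norm x = 1" and y: "y \<in> rigid u v" "norm y = 1"
    and small: "norm (hinner y x) ^ 2 \<le> 1/2"
  shows "\<exists>z\<in>rigid u v. norm z = 1 \<and> hinner x z = 0"
proof -
  define q where "q = hinner y x"
  define m where "m = norm q ^ 2"
  define e where "e = x - q *s y"
  have xx: "hinner x x = 1" and yy: "hinner y y = 1"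
    using x y norm_eq_1_iff_hinner_self by auto
  have xy: "hinner x y = cnj q" unfolding q_def by (simp add: cnj_hinner)
  have cq1: "cnj q * q = of_real m" and cq2: "q * cnj q = of_real m"
    unfolding m_def using mult_cnj_self cnj_mult_self by auto
  have ye: "hinner y e = 0" unfolding e_def by (simp add: yy q_def)
  then have ey: "hinner e y = 0" by (simp add: hinner_eq_0_commute)
  have xe: "hinner x e = of_real (1 - m)" unfolding e_def by (simp add: xx xy cq2)
  have ee: "hinner e e = of_real (1 - m)"
    unfolding e_def by (simp add: xx yy xy q_def[symmetric] cq1 cq2 algebra_simps)
  have m: "0 \<le> m" "m \<le> 1/2" using small unfolding m_def q_def by simp_all
  then have "hinner e e \<noteq> 0" using ee by simp
  then have "e \<noteq> 0" by auto
  moreover have "y \<noteq> 0" using y(2) by auto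
  ultimately obtain g where g: "norm g = 1" and yg: "hinner y g = 0" and eg: "hinner e g = 0"
    using exists_unit_orthogonal[OF ye] by blast
  have gg: "hinner g g = 1" using g norm_eq_1_iff_hinner_self by blast
  have gy: "hinner g y = 0" and ge: "hinner g e = 0"
    using yg eg by (simp_all add: hinner_eq_0_commute)
  have "x = e + q *s y" unfolding e_def by simp
  then have xg: "hinner x g = 0" using eg yg by simp
  define t where "t = - m / (1 - m)"
  define s where "s = sqrt ((1 - m) * (1 - t ^ 2))"
  have "\<bar>t\<bar> \<le> 1" unfolding t_def using m by (simp add: abs_div_pos)
  then have s2: "s ^ 2 = (1 - m) * (1 - t ^ 2)"
    unfolding s_def using m by (simp add: abs_square_le_1)
  define z where "z = q *s y + (of_real t :: 'a) *s e + (of_real s :: 'a) *s g"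
  have "hinner z z = of_real (m + t ^ 2 * (1 - m) + s ^ 2)"
    unfolding z_def
    by (simp add: yy ye yg ey ee eg gy ge gg cq1 cq2 algebra_simps power2_eq_square)
  also have "m + t ^ 2 * (1 - m) + s ^ 2 = 1" unfolding s2 by (simp add: algebra_simps)
  finally have nz: "norm z = 1" using norm_eq_1_iff_hinner_self by simp
  have "hinner x z = of_real (m + t * (1 - m))" unfolding z_def by (simp add: xy xe xg cq2)
  also have "m + t * (1 - m) = 0" unfolding t_def using m by simp
  finally have "hinner x z = 0" by simp
  moreover have "hinner y z = hinner y x" unfolding z_def by (simp add: yy ye yg q_def)
  then have "z \<in> rigid u v" using rigid_move_rigid[OF y(1) x(1)] x(2) nz by simp
  ultimately show ?thesis using nz by blast
qed

lemma rigid_orthogonal_after_doublings: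
  assumes x: "x \<in> rigid u v" "norm x = 1" and y: "y \<in> rigid u v" "norm y = 1"
    and "norm (hinner y x) ^ 2 < 1" and "1/2 \<le> 2 ^ n * (1 - norm (hinner y x) ^ 2)"
  shows "\<exists>z\<in>rigid u v. norm z = 1 \<and> hinner x z = 0"
  using y assms(5,6)
proof (induction n arbitrary: y)
  case 0
  then show ?case using rigid_orthogonal_if_small_hinner[OF x] by simp
next
  case (Suc n)
  define m where "m = norm (hinner y x) ^ 2"
  show ?case
  proof (cases "m \<le> 1/2")
    case True
    then show ?thesis using rigid_orthogonal_if_small_hinner[OF x Suc.prems(1,2)] m_def by simp
  next
    case False
    obtain z where z: "z \<in> rigid u v" "norm z = 1"
      and mz: "norm (hinner z x) ^ 2 = (2 * m - 1) ^ 2"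
      using rigid_doubling[OF x Suc.prems(1,2)] m_def by blast
    have "m < 1" using Suc.prems(3) m_def by simp
    have "2 * (1 - m) \<le> 4 * m * (1 - m)" using False \<open>m < 1\<close> by (intro mult_right_mono) auto
    also have "4 * m * (1 - m) = 1 - (2 * m - 1) ^ 2" by (simp add: power2_eq_square algebra_simps)
    finally have doubled: "2 * (1 - m) \<le> 1 - (2 * m - 1) ^ 2" .
    then have "(2 * m - 1) ^ 2 < 1" using \<open>m < 1\<close> by simp
    moreover have "2 ^ Suc n * (1 - m) \<le> 2 ^ n * (1 - (2 * m - 1) ^ 2)"
      using mult_left_mono[OF doubled, of "2 ^ n"] by simp
    then have "1/2 \<le> 2 ^ n * (1 - (2 * m - 1) ^ 2)"
      using Suc.prems(4) unfolding m_def by linarith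
    ultimately show ?thesis using Suc.IH[OF z] mz by simp
  qed
qed

lemma rigid_orthogonal_exists:
  assumes x: "x \<in> rigid u v" "norm x = 1" and y: "y \<in> rigid u v" "norm y = 1"
    and "norm (hinner y x) ^ 2 < 1"
  shows "\<exists>z\<in>rigid u v. norm z = 1 \<and> hinner x z = 0"
proof -
  define m where "m = norm (hinner y x) ^ 2"
  obtain n where "1 / (2 * (1 - m)) < 2 ^ n"
    using real_arch_pow[of 2] by fastforce
  then have "1/2 \<le> 2 ^ n * (1 - m)" using assms(5) m_def by (simp add: field_simps)
  then show ?thesis using rigid_orthogonal_after_doublings[OF x y assms(5)] m_def by simp
qed

lemma stab_group_reaches_unit:
  assumes x: "x \<in> rigid u v" "norm x = 1" "hinner u x = 0" and "norm u = 1" and "norm w = 1"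
  shows "\<exists>g\<in>stab_group u v. g u = w"
proof -
  define \<gamma> where "\<gamma> = hinner u w"
  have "u \<noteq> 0" "x \<noteq> 0" using x(2) \<open>norm u = 1\<close> by auto
  then obtain e where e: "norm e = 1" "hinner u e = 0" "hinner x e = 0"
    using exists_unit_orthogonal[OF x(3)] by blast
  have uu: "hinner u u = 1" and ee: "hinner e e = 1"
    using \<open>norm u = 1\<close> e(1) norm_eq_1_iff_hinner_self by auto
  have eu: "hinner e u = 0" using e(2) by (simp add: hinner_eq_0_commute)
  define t where "t = sqrt (1 - norm \<gamma> ^ 2)"
  have "norm \<gamma> ^ 2 \<le> 1" unfolding \<gamma>_def using unit_hinner_le_1 assms(4,5) by blast
  then have t2: "t ^ 2 = 1 - norm \<gamma> ^ 2" unfolding t_def by simp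
  define z where "z = \<gamma> *s u + (of_real t :: 'a) *s e"
  have "hinner z z = of_real (norm \<gamma> ^ 2 + t ^ 2)"
    unfolding z_def using cnj_mult_self[of \<gamma>]
    by (simp add: uu ee e(2) eu power2_eq_square algebra_simps)
  then have "norm z = 1" using t2 norm_eq_1_iff_hinner_self by simp
  have "hinner x u = 0" using x(3) by (simp add: hinner_eq_0_commute)
  then have "hinner x u = hinner x z" unfolding z_def by (simp add: e(3))
  moreover have "norm u = norm z" using \<open>norm u = 1\<close> \<open>norm z = 1\<close> by simp
  ultimately obtain g1 where g1: "g1 \<in> stab_group u v" "g1 u = z"
    using rigid_move[OF x(1)] by blast
  have "hinner u z = hinner u w" unfolding z_def \<gamma>_def by (simp add: uu e(2))
  moreover have "norm z = norm w" using \<open>norm z = 1\<close> \<open>norm w = 1\<close> by simp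
  ultimately obtain g2 where g2: "g2 \<in> stab_group u v" "g2 z = w"
    using rigid_move[OF rigid_left] by blast
  have "g2 \<circ> g1 \<in> stab_group u v" using g2(1) g1(1) by (rule stab_group_comp)
  then show ?thesis using g1(2) g2(2) by (intro bexI[of _ "g2 \<circ> g1"]) auto
qed

lemma stab_group_transitive:
  fixes u v w :: "'a^3"
  assumes "norm u = 1" and "norm v = 1" and "norm w = 1" and "\<not> parallel3 u v"
  shows "\<exists>g\<in>stab_group u v. g u = w"
proof -
  have "norm (hinner v u) ^ 2 \<noteq> 1"
    using unit_hinner_eq_1[OF assms(2,1)] assms(4) unfolding parallel3_def by auto
  then have "norm (hinner v u) ^ 2 < 1" using unit_hinner_le_1[OF assms(2,1)] by simp
  then obtain x where "x \<in> rigid u v" "norm x = 1" "hinner u x = 0"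
    using rigid_orthogonal_exists[OF rigid_left assms(1) rigid_right assms(2)] by blast
  then show ?thesis using stab_group_reaches_unit assms(1,3) by blast
qed

end

interpretation real: field_conjugation "\<lambda>x::real. x"
  by unfold_locales (simp_all add: power2_eq_square)

interpretation complex: field_conjugation cnj
  by unfold_locales (simp_all add: complex_norm_square del: of_real_power)

lemma lemma3p5_propI:
  assumes "\<And>u v w :: 'a::real_normed_field^3. norm u = 1 \<Longrightarrow> norm v = 1 \<Longrightarrow> norm w = 1 \<Longrightarrow>
    \<not> parallel3 u v \<Longrightarrow> \<exists>g\<in>stab_group u v. g u = w"
  shows "lemma3p5_prop TYPE('a)"
  unfolding lemma3p5_prop_def
proof (intro allI impI)
  fix u v w :: "'a^3"
  assume "norm u = 1" "norm v = 1" "norm w = 1" "\<not> parallel3 u v"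
  then obtain hs where "set hs \<subseteq> iso_stabilizer u \<union> iso_stabilizer v" "foldr (\<circ>) hs id u = w"
    using assms unfolding stab_group_def by blast
  then show "\<exists>hs. (\<forall>h\<in>set hs. lin_iso_aut h \<and> (h u = u \<or> h v = v)) \<and> foldr (\<circ>) hs id u = w"
    unfolding iso_stabilizer_def by blast
qed

theorem lemma3p5:
  shows "lemma3p5_prop TYPE(real) \<and> lemma3p5_prop TYPE(complex)"
  using lemma3p5_propI[OF real.stab_group_transitive] lemma3p5_propI[OF complex.stab_group_transitive]
  by blast

end
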